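(* For every density operator $\rho$ on $\mathbb{C}^d$, $$\frac1d\le C_{\mathcal{F}}(\rho)\le\lambda_{\max}\le 1,$$ where $\lambda_{\max}$ is the largest eigenvalue of $\rho$. Moreover $C_{\mathcal{F}}(\rho)=1$ if and only if $\rho$ is (the projector onto) a maximally coherent state, and if $\rho$ is incoherent then $C_{\mathcal{F}}(\rho)=1/d$.
   Context: Fix the computational basis $\{|i\rangle\}_{i=0}^{d-1}$ of $\mathbb{C}^d$ as the incoherent basis; a state is incoherent if it is diagonal in this basis. A maximally coherent state is a pure state of the form $\frac1{\sqrt d}\sum_{i}e^{\mathrm{i}\theta_i}|i\rangle$ with real $\theta_i$. The quantum coherence fraction is $C_{\mathcal{F}}(\rho)=\max_{|\phi\rangle\text{ maximally coherent}}\langle\phi|\rho|\phi\rangle$. *)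

theory Defs
  imports "Jordan_Normal_Form.Schur_Decomposition"
begin

definition mat_trace :: "complex mat \<Rightarrow> complex" where
  "mat_trace A = (\<Sum>i<dim_row A. A $$ (i, i))"

definition hermitian_mat :: "complex mat \<Rightarrow> bool" where
  "hermitian_mat A \<longleftrightarrow> mat_adjoint A = A"

definition expval :: "complex mat \<Rightarrow> complex vec \<Rightarrow> complex" where
  "expval A v = scalar_prod (conjugate v) (A *\<^sub>v v)"

definition psd_mat :: "nat \<Rightarrow> complex mat \<Rightarrow> bool" where
  "psd_mat d A \<longleftrightarrow> A \<in> carrier_mat d d \<and> hermitian_mat A \<and>
     (\<forall>v \<in> carrier_vec d. Re (expval A v) \<ge> 0)"

definition density_op :: "nat \<Rightarrow> complex mat \<Rightarrow> bool" where
  "density_op d \<rho> \<longleftrightarrow> psd_mat d \<rho> \<and> mat_trace \<rho> = 1"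

definition incoherent :: "nat \<Rightarrow> complex mat \<Rightarrow> bool" where
  "incoherent d \<rho> \<longleftrightarrow> (\<forall>i<d. \<forall>j<d. i \<noteq> j \<longrightarrow> \<rho> $$ (i, j) = 0)"

definition max_coh_vec :: "nat \<Rightarrow> (nat \<Rightarrow> real) \<Rightarrow> complex vec" where
  "max_coh_vec d \<theta> = vec d (\<lambda>i. cis (\<theta> i) / complex_of_real (sqrt (real d)))"

definition max_coh_states :: "nat \<Rightarrow> complex vec set" where
  "max_coh_states d = range (max_coh_vec d)"

definition proj :: "complex vec \<Rightarrow> complex mat" where
  "proj \<phi> = mat (dim_vec \<phi>) (dim_vec \<phi>) (\<lambda>(i, j). \<phi> $ i * cnj (\<phi> $ j))"

text \<open>Coherence fraction: the maximum (= supremum, attained by compactness) of \<langle>phi|rho|phi\<rangle>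
  over maximally coherent phi; the value is real for Hermitian rho.\<close>
definition coh_fraction :: "nat \<Rightarrow> complex mat \<Rightarrow> real" where
  "coh_fraction d \<rho> = (SUP \<phi> \<in> max_coh_states d. Re (expval \<rho> \<phi>))"

text \<open>Largest eigenvalue (eigenvalues of Hermitian matrices are real).\<close>
definition lambda_max :: "complex mat \<Rightarrow> real" where
  "lambda_max \<rho> = Max (Re ` {k. eigenvalue \<rho> k})"

end

theory Submission
  imports Defs "Jordan_Normal_Form.Spectral_Radius" "HOL-Analysis.Convex"
    "HOL-Analysis.Elementary_Metric_Spaces"
begin

text \<open>
  Write \<open>\<langle>\<phi>|\<rho>|\<phi>\<rangle>\<close> for the expectation value. For unit \<open>\<phi>\<close> it is at most the spectral radius of the
  Hermitian matrix \<open>\<rho>\<close>, which for a density operator is \<open>\<lambda>\<^sub>m\<^sub>a\<^sub>x\<close>; and \<open>\<lambda>\<^sub>m\<^sub>a\<^sub>x \<le> tr \<rho> = 1\<close>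
  because the eigenvalues are nonnegative. The \<open>d\<close> maximally coherent columns of the discrete
  Fourier transform form an orthonormal basis, so their expectation values add up to
  \<open>tr \<rho> = 1\<close> and one of them is at least \<open>1/d\<close>; if \<open>\<rho>\<close> is diagonal, every maximally coherent
  \<open>\<phi>\<close> gives exactly \<open>\<Sum>\<^sub>i \<rho>\<^sub>i\<^sub>i / d = 1/d\<close>.

  For the characterisation of \<open>C\<^sub>F(\<rho>) = 1\<close>, purity \<open>tr \<rho>\<^sup>2 \<le> 1\<close> gives
  \<open>\<Sum>\<^sub>i\<^sub>j |\<rho>\<^sub>i\<^sub>j - \<phi>\<^sub>i \<phi>\<^sub>j\<^sup>*|\<^sup>2 \<le> 2 - 2\<langle>\<phi>|\<rho>|\<phi>\<rangle>\<close>. Hence the projectors of maximally coherent states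
  \<open>\<phi>\<^sub>n\<close> with \<open>\<langle>\<phi>\<^sub>n|\<rho>|\<phi>\<^sub>n\<rangle> \<rightarrow> 1\<close> converge to \<open>\<rho>\<close> entrywise, and \<open>\<rho>\<close> inherits the closed conditions
  \<open>|P\<^sub>i\<^sub>0| = 1/d\<close> and \<open>P\<^sub>i\<^sub>j = d P\<^sub>i\<^sub>0 P\<^sub>j\<^sub>0\<^sup>*\<close> that characterise these projectors.
\<close>

section \<open>Hermitian matrices and expectation values\<close>

lemma hermitian_matD:
  assumes "A \<in> carrier_mat n n" "hermitian_mat A" "i < n" "j < n"
  shows "A $$ (j, i) = cnj (A $$ (i, j))"
proof -
  have "mat_adjoint A $$ (j, i) = cnj (A $$ (i, j))"
    using assms by (simp add: mat_adjoint_def mat_of_rows_index)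
  then show ?thesis
    using assms(2) by (simp add: hermitian_mat_def)
qed

lemma hermitian_matI:
  assumes "A \<in> carrier_mat n n" "\<And>i j. i < n \<Longrightarrow> j < n \<Longrightarrow> A $$ (j, i) = cnj (A $$ (i, j))"
  shows "hermitian_mat A"
proof (unfold hermitian_mat_def, rule eq_matI)
  fix i j assume "i < dim_row A" "j < dim_col A"
  then show "mat_adjoint A $$ (i, j) = A $$ (i, j)"
    using assms(1) assms(2)[of j i] by (simp add: mat_adjoint_def mat_of_rows_index)
qed (use assms(1) in \<open>simp_all add: mat_adjoint_def\<close>)

lemma hermitian_mat_mult_self:
  assumes A: "A \<in> carrier_mat n n" "hermitian_mat A"
  shows "hermitian_mat (A * A)"
proof (rule hermitian_matI)
  fix i j assume ij: "i < n" "j < n"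
  have "(A * A) $$ (j, i) = (\<Sum>k<n. A $$ (j, k) * A $$ (k, i))"
    using A ij by (simp add: scalar_prod_def lessThan_atLeast0)
  also have "\<dots> = cnj (\<Sum>k<n. A $$ (i, k) * A $$ (k, j))"
  proof (unfold cnj_sum, intro sum.cong refl)
    fix k assume "k \<in> {..<n}"
    then have "A $$ (j, k) = cnj (A $$ (k, j))" "A $$ (k, i) = cnj (A $$ (i, k))"
      using ij by (auto intro!: hermitian_matD[OF A])
    then show "A $$ (j, k) * A $$ (k, i) = cnj (A $$ (i, k) * A $$ (k, j))"
      by (simp add: mult.commute)
  qed
  also have "\<dots> = cnj ((A * A) $$ (i, j))"
    using A ij by (simp add: scalar_prod_def lessThan_atLeast0)
  finally show "(A * A) $$ (j, i) = cnj ((A * A) $$ (i, j))" .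
qed (use A in simp)

lemma pow_mat_add:
  assumes "A \<in> carrier_mat n n"
  shows "A ^\<^sub>m (k + l) = A ^\<^sub>m k * A ^\<^sub>m l"
proof (induction l)
  case (Suc l)
  then show ?case
    using assms by (simp add: assoc_mult_mat[of _ n n _ n _ n])
qed (use assms in simp)

lemma pow_mat_two_pow_Suc:
  assumes "A \<in> carrier_mat n n"
  shows "A ^\<^sub>m 2 ^ Suc k = A ^\<^sub>m 2 ^ k * A ^\<^sub>m 2 ^ k"
  using pow_mat_add[OF assms, of "2 ^ k" "2 ^ k"] by (simp add: mult_2)

lemma hermitian_mat_pow_two_pow:
  assumes "A \<in> carrier_mat n n" "hermitian_mat A"
  shows "hermitian_mat (A ^\<^sub>m 2 ^ k)"
proof (induction k)
  case (Suc k)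
  show ?case
    unfolding pow_mat_two_pow_Suc[OF assms(1)]
    by (rule hermitian_mat_mult_self[OF pow_carrier_mat[OF assms(1)] Suc])
qed (use assms in simp)

lemma complex_mult_cnj_cmod_sq:
  shows "z * cnj z = (of_real (cmod z))\<^sup>2" and "cnj z * z = (of_real (cmod z))\<^sup>2"
  by (metis complex_norm_square of_real_power mult.commute)+

lemma conjugate_scalar_prod_self:
  assumes "v \<in> carrier_vec n"
  shows "conjugate v \<bullet> v = of_real (\<Sum>i<n. (cmod (v $ i))\<^sup>2)"
  using assms by (simp add: scalar_prod_def lessThan_atLeast0 complex_mult_cnj_cmod_sq)

lemma expval_eq_sum:
  assumes "A \<in> carrier_mat n n" "v \<in> carrier_vec n"
  shows "expval A v = (\<Sum>i<n. \<Sum>j<n. cnj (v $ i) * A $$ (i, j) * v $ j)"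
  using assms
  by (auto simp: expval_def scalar_prod_def lessThan_atLeast0 sum_distrib_left mult.assoc
      intro!: sum.cong)

lemma expval_hermitian_real:
  assumes A: "A \<in> carrier_mat n n" "hermitian_mat A" and v: "v \<in> carrier_vec n"
  shows "expval A v = of_real (Re (expval A v))"
proof -
  have "cnj (expval A v) = (\<Sum>i<n. \<Sum>j<n. v $ i * A $$ (j, i) * cnj (v $ j))"
    unfolding expval_eq_sum[OF A(1) v] cnj_sum
    by (intro sum.cong refl) (simp add: hermitian_matD[OF A, symmetric])
  also have "\<dots> = expval A v"
    unfolding expval_eq_sum[OF A(1) v] by (subst sum.swap) (simp add: mult_ac)
  finally show ?thesis
    by (simp add: complex_eq_iff)
qed

lemma hermitian_scalar_prod_swap:
  assumes A: "A \<in> carrier_mat n n" "hermitian_mat A" and u: "u \<in> carrier_vec n" and w: "w \<in> carrier_vec n"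
  shows "conjugate u \<bullet> (A *\<^sub>v w) = conjugate (A *\<^sub>v u) \<bullet> w"
proof -
  have "conjugate u \<bullet> (A *\<^sub>v w) = (\<Sum>i<n. \<Sum>j<n. cnj (u $ i) * A $$ (i, j) * w $ j)"
    using A u w by (auto simp: scalar_prod_def lessThan_atLeast0 sum_distrib_left mult.assoc
        intro!: sum.cong)
  also have "\<dots> = (\<Sum>j<n. \<Sum>i<n. cnj (A $$ (j, i) * u $ i) * w $ j)"
    by (subst sum.swap) (use A in \<open>auto simp: hermitian_matD[OF A, symmetric] intro!: sum.cong\<close>)
  also have "\<dots> = conjugate (A *\<^sub>v u) \<bullet> w"
    using A u w by (auto simp: scalar_prod_def lessThan_atLeast0 sum_distrib_right
        intro!: sum.cong)
  finally show ?thesis .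
qed

lemma cmod_sum_cnj_mult_sq_le:
  "(cmod (\<Sum>i\<in>I. cnj (a i) * b i))\<^sup>2 \<le> (\<Sum>i\<in>I. (cmod (a i))\<^sup>2) * (\<Sum>i\<in>I. (cmod (b i))\<^sup>2)"
proof -
  have "cmod (\<Sum>i\<in>I. cnj (a i) * b i) \<le> (\<Sum>i\<in>I. cmod (a i) * cmod (b i))"
    by (rule order.trans[OF norm_sum]) (simp add: norm_mult)
  then have "(cmod (\<Sum>i\<in>I. cnj (a i) * b i))\<^sup>2 \<le> (\<Sum>i\<in>I. cmod (a i) * cmod (b i))\<^sup>2"
    by (simp add: power_mono)
  also have "\<dots> \<le> (\<Sum>i\<in>I. (cmod (a i))\<^sup>2) * (\<Sum>i\<in>I. (cmod (b i))\<^sup>2)"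
    by (rule Cauchy_Schwarz_ineq_sum)
  finally show ?thesis .
qed

lemma expval_sq_le_expval_mult_self:
  assumes A: "A \<in> carrier_mat n n" "hermitian_mat A" and v: "v \<in> carrier_vec n"
    and unit: "(\<Sum>i<n. (cmod (v $ i))\<^sup>2) = 1"
  shows "(Re (expval A v))\<^sup>2 \<le> Re (expval (A * A) v)"
proof -
  define w where "w = A *\<^sub>v v"
  have w: "w \<in> carrier_vec n"
    using A v by (simp add: w_def)
  have "expval (A * A) v = conjugate w \<bullet> w"
    using hermitian_scalar_prod_swap[OF A v w] A v by (simp add: expval_def w_def)
  then have sq: "Re (expval (A * A) v) = (\<Sum>i<n. (cmod (w $ i))\<^sup>2)"
    using conjugate_scalar_prod_self[OF w] by simp
  have "expval A v = (\<Sum>i<n. cnj (v $ i) * w $ i)"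
    unfolding expval_def w_def[symmetric] using v w by (simp add: scalar_prod_def lessThan_atLeast0)
  then have "(cmod (expval A v))\<^sup>2 \<le> (\<Sum>i<n. (cmod (v $ i))\<^sup>2) * (\<Sum>i<n. (cmod (w $ i))\<^sup>2)"
    using cmod_sum_cnj_mult_sq_le by metis
  then have "(cmod (expval A v))\<^sup>2 \<le> Re (expval (A * A) v)"
    using unit sq by simp
  moreover have "(Re (expval A v))\<^sup>2 \<le> (cmod (expval A v))\<^sup>2"
    by (simp add: abs_Re_le_cmod power_mono flip: abs_le_square_iff)
  ultimately show ?thesis
    by linarith
qed

section \<open>The numerical range lies below the spectral radius\<close>

lemma expval_pow_two_pow_ge:
  assumes A: "A \<in> carrier_mat n n" "hermitian_mat A" and v: "v \<in> carrier_vec n"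
    and unit: "(\<Sum>i<n. (cmod (v $ i))\<^sup>2) = 1" and nonneg: "0 \<le> Re (expval A v)"
  shows "(Re (expval A v)) ^ 2 ^ k \<le> Re (expval (A ^\<^sub>m 2 ^ k) v)"
proof (induction k)
  case (Suc k)
  let ?M = "A ^\<^sub>m 2 ^ k"
  have "(Re (expval A v)) ^ 2 ^ Suc k = ((Re (expval A v)) ^ 2 ^ k)\<^sup>2"
    by (simp add: power_mult[symmetric] mult.commute)
  also have "\<dots> \<le> (Re (expval ?M v))\<^sup>2"
    using Suc nonneg by (simp add: power_mono)
  also have "\<dots> \<le> Re (expval (?M * ?M) v)"
    by (rule expval_sq_le_expval_mult_self[OF pow_carrier_mat[OF A(1)]
          hermitian_mat_pow_two_pow[OF A] v unit])
  also have "?M * ?M = A ^\<^sub>m 2 ^ Suc k"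
    by (rule pow_mat_two_pow_Suc[OF A(1), symmetric])
  finally show ?case .
qed (use A in simp)

lemma cmod_expval_le_norm_bound:
  assumes A: "A \<in> carrier_mat n n" and v: "v \<in> carrier_vec n"
    and v_le: "\<And>i. i < n \<Longrightarrow> cmod (v $ i) \<le> 1" and bound: "norm_bound A b"
  shows "cmod (expval A v) \<le> real n * real n * b"
proof -
  have "cmod (expval A v) \<le> (\<Sum>i<n. \<Sum>j<n. cmod (cnj (v $ i) * A $$ (i, j) * v $ j))"
    unfolding expval_eq_sum[OF A v] by (rule order.trans[OF norm_sum sum_mono]) (rule norm_sum)
  also have "\<dots> \<le> (\<Sum>i<n. \<Sum>j<n. b)"
  proof (intro sum_mono)
    fix i j assume "i \<in> {..<n}" "j \<in> {..<n}"
    then have "cmod (v $ i) \<le> 1" "cmod (v $ j) \<le> 1" "cmod (A $$ (i, j)) \<le> b"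
      using v_le bound A by (auto simp: norm_bound_def)
    then have "cmod (v $ i) * cmod (A $$ (i, j)) * cmod (v $ j) \<le> 1 * b * 1"
      by (intro mult_mono) (auto intro: order.trans[OF norm_ge_zero])
    then show "cmod (cnj (v $ i) * A $$ (i, j) * v $ j) \<le> b"
      by (simp add: norm_mult)
  qed
  finally show ?thesis
    by simp
qed

lemma eigenvalue_smult:
  assumes A: "A \<in> carrier_mat n n" and ev: "eigenvalue A k"
  shows "eigenvalue (c \<cdot>\<^sub>m A) (c * k)"
proof -
  obtain v where v: "v \<in> carrier_vec n" "v \<noteq> 0\<^sub>v n" "A *\<^sub>v v = k \<cdot>\<^sub>v v"
    using A ev unfolding eigenvalue_def eigenvector_def by auto
  have "(c \<cdot>\<^sub>m A) *\<^sub>v v = c \<cdot>\<^sub>v (A *\<^sub>v v)"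
    by (rule eq_vecI) (use A v(1) in auto)
  then show ?thesis
    using A v unfolding eigenvalue_def eigenvector_def by (auto simp: smult_smult_assoc)
qed

lemma pow_mat_smult:
  fixes A :: "'a :: comm_semiring_1 mat"
  assumes "A \<in> carrier_mat n n"
  shows "(c \<cdot>\<^sub>m A) ^\<^sub>m k = c ^ k \<cdot>\<^sub>m A ^\<^sub>m k"
proof (induction k)
  case (Suc k)
  have "(c \<cdot>\<^sub>m A) ^\<^sub>m Suc k = c ^ k \<cdot>\<^sub>m A ^\<^sub>m k * (c \<cdot>\<^sub>m A)"
    using Suc by simp
  also have "\<dots> = c ^ k \<cdot>\<^sub>m (c \<cdot>\<^sub>m (A ^\<^sub>m k * A))"
    using assms by (simp add: mult_smult_assoc_mat[of "A ^\<^sub>m k" n n _ n]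
        mult_smult_distrib[of "A ^\<^sub>m k" n n _ n])
  also have "\<dots> = c ^ Suc k \<cdot>\<^sub>m A ^\<^sub>m Suc k"
    by (rule eq_matI) (auto simp: mult_ac)
  finally show ?case .
qed (use assms in \<open>auto intro!: eq_matI\<close>)

lemma pow_mat_norm_bound_spectral_radius_less:
  fixes A :: "complex mat"
  assumes A: "A \<in> carrier_mat n n" and n: "n > 0" and less: "spectral_radius A < \<mu>"
  obtains c where "\<And>k. norm_bound (A ^\<^sub>m k) (c * \<mu> ^ k)"
proof -
  have "0 \<le> spectral_radius A"
    using spectral_radius_mem_max(1)[OF A n] by auto
  then have \<mu>: "\<mu> > 0"
    using less by linarith
  define B where "B = complex_of_real (1 / \<mu>) \<cdot>\<^sub>m A"
  have B: "B \<in> carrier_mat n n"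
    using A by (simp add: B_def)
  have A_eq: "A = complex_of_real \<mu> \<cdot>\<^sub>m B"
    using A \<mu> by (auto simp: B_def intro!: eq_matI)
  have "spectral_radius B < 1"
  proof -
    obtain k where k: "eigenvalue B k" "spectral_radius B = cmod k"
      using spectral_radius_mem_max(1)[OF B n] by (auto simp: spectrum_def)
    have "eigenvalue A (of_real \<mu> * k)"
      unfolding A_eq by (rule eigenvalue_smult[OF B k(1)])
    then have "cmod (of_real \<mu> * k) \<le> spectral_radius A"
      by (intro spectral_radius_mem_max(2)[OF A n]) (auto simp: spectrum_def)
    then have "\<mu> * cmod k \<le> spectral_radius A"
      using \<mu> by (simp add: norm_mult)
    then show ?thesis
      using k(2) less \<mu> mult_less_cancel_left_pos[of \<mu> "cmod k" 1] by linarith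
  qed
  then obtain c where c: "\<And>k. norm_bound (B ^\<^sub>m k) c"
    using spectral_radius_jnf_norm_bound_less_1_upper_triangular[OF B] by blast
  have "norm_bound (A ^\<^sub>m k) (c * \<mu> ^ k)" for k
  proof (rule norm_boundI)
    fix i j assume "i < dim_row (A ^\<^sub>m k)" "j < dim_col (A ^\<^sub>m k)"
    then have ij: "i < n" "j < n"
      using pow_carrier_mat[OF A, of k] by auto
    have "(A ^\<^sub>m k) $$ (i, j) = of_real (\<mu> ^ k) * (B ^\<^sub>m k) $$ (i, j)"
      unfolding A_eq pow_mat_smult[OF B] using B ij by simp
    moreover have "cmod ((B ^\<^sub>m k) $$ (i, j)) \<le> c"
      using c[of k] B ij by (auto simp: norm_bound_def)
    ultimately show "cmod ((A ^\<^sub>m k) $$ (i, j)) \<le> c * \<mu> ^ k"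
      using \<mu> by (simp add: norm_mult norm_power mult.commute[of c] mult_left_mono)
  qed
  then show ?thesis
    using that by blast
qed

lemma cmod_le_one_of_unit:
  assumes "(\<Sum>i<n. (cmod (v $ i))\<^sup>2) = 1" "i < n"
  shows "cmod (v $ i) \<le> 1"
proof -
  have "(cmod (v $ i))\<^sup>2 \<le> (\<Sum>i<n. (cmod (v $ i))\<^sup>2)"
    by (rule member_le_sum) (use assms in auto)
  then show ?thesis
    using assms(1) by (simp add: power_le_one_iff abs_square_le_1)
qed

text \<open>If \<open>x = Re \<langle>v|A|v\<rangle>\<close> exceeded the spectral radius, pick \<open>\<mu>\<close> in between: then
  \<open>x^(2^k) \<le> \<langle>v|A^(2^k)|v\<rangle> = O(\<mu>^(2^k))\<close> (the inequality by repeated Cauchy-Schwarz), which is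
  absurd for large \<open>k\<close>.\<close>
lemma hermitian_expval_le_spectral_radius:
  assumes A: "A \<in> carrier_mat n n" "hermitian_mat A" and v: "v \<in> carrier_vec n"
    and unit: "(\<Sum>i<n. (cmod (v $ i))\<^sup>2) = 1"
  shows "Re (expval A v) \<le> spectral_radius A"
proof (rule ccontr)
  define x where "x = Re (expval A v)"
  assume "\<not> Re (expval A v) \<le> spectral_radius A"
  then have x: "spectral_radius A < x"
    by (simp add: x_def)
  have n: "n > 0"
    using unit by (cases n) auto
  have "0 \<le> spectral_radius A"
    using spectral_radius_mem_max(1)[OF A(1) n] by auto
  define \<mu> where "\<mu> = (x + spectral_radius A) / 2"
  have \<mu>: "spectral_radius A < \<mu>" "0 < \<mu>" "\<mu> < x"
    using x \<open>0 \<le> spectral_radius A\<close> by (auto simp: \<mu>_def)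
  then have x_nonneg: "0 \<le> Re (expval A v)"
    by (simp add: x_def)
  obtain c where c: "\<And>k. norm_bound (A ^\<^sub>m k) (c * \<mu> ^ k)"
    using pow_mat_norm_bound_spectral_radius_less[OF A(1) n \<mu>(1)] by blast
  have bound: "(x / \<mu>) ^ 2 ^ k \<le> real n * real n * c" for k
  proof -
    have "x ^ 2 ^ k \<le> Re (expval (A ^\<^sub>m 2 ^ k) v)"
      unfolding x_def by (rule expval_pow_two_pow_ge[OF A v unit x_nonneg])
    also have "\<dots> \<le> cmod (expval (A ^\<^sub>m 2 ^ k) v)"
      by (rule complex_Re_le_cmod)
    also have "\<dots> \<le> real n * real n * (c * \<mu> ^ 2 ^ k)"
      using cmod_le_one_of_unit[OF unit]
      by (intro cmod_expval_le_norm_bound[OF pow_carrier_mat[OF A(1)] v _ c])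
    finally show ?thesis
      using \<mu> by (simp add: power_divide divide_le_eq mult.assoc)
  qed
  obtain K where K: "real n * real n * c < (x / \<mu>) ^ K"
    using real_arch_pow[of "x / \<mu>"] \<mu> by auto
  have "(x / \<mu>) ^ K \<le> (x / \<mu>) ^ 2 ^ K"
    using \<mu> by (intro power_increasing) (auto intro: less_imp_le less_exp)
  then show False
    using K bound[of K] by simp
qed

section \<open>Spectra of density operators\<close>

lemma mat_trace_mult_comm:
  assumes "A \<in> carrier_mat n m" "B \<in> carrier_mat m n"
  shows "mat_trace (A * B) = mat_trace (B * A)"
proof -
  have "mat_trace (A * B) = (\<Sum>i<n. \<Sum>j<m. A $$ (i, j) * B $$ (j, i))"
    using assms by (auto simp: mat_trace_def scalar_prod_def lessThan_atLeast0 intro!: sum.cong)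
  also have "\<dots> = (\<Sum>j<m. \<Sum>i<n. B $$ (j, i) * A $$ (i, j))"
    by (subst sum.swap) (simp add: mult.commute)
  also have "\<dots> = mat_trace (B * A)"
    using assms by (auto simp: mat_trace_def scalar_prod_def lessThan_atLeast0 intro!: sum.cong)
  finally show ?thesis .
qed

lemma mat_trace_similar:
  assumes "similar_mat_wit A B P Q"
  shows "mat_trace A = mat_trace B"
proof -
  define n where "n = dim_row A"
  note wit = similar_mat_witD[OF n_def assms]
  have "mat_trace A = mat_trace (P * (B * Q))"
    using wit by (simp add: assoc_mult_mat[of _ n n _ n _ n])
  also have "\<dots> = mat_trace (B * Q * P)"
    using wit by (intro mat_trace_mult_comm[of _ n n]) auto
  also have "B * Q * P = B"
    using wit by (simp add: assoc_mult_mat[of _ n n _ n _ n])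
  finally show ?thesis .
qed

lemma upper_triangular_mult_self_diag:
  fixes B :: "'a :: semiring_1 mat"
  assumes B: "B \<in> carrier_mat n n" "upper_triangular B" and i: "i < n"
  shows "(B * B) $$ (i, i) = (B $$ (i, i))\<^sup>2"
proof -
  have "(B * B) $$ (i, i) = (\<Sum>k<n. B $$ (i, k) * B $$ (k, i))"
    using B i by (simp add: scalar_prod_def lessThan_atLeast0)
  also have "\<dots> = (\<Sum>k<n. if k = i then (B $$ (i, i))\<^sup>2 else 0)"
  proof (intro sum.cong refl)
    fix k assume "k \<in> {..<n}"
    then show "B $$ (i, k) * B $$ (k, i) = (if k = i then (B $$ (i, i))\<^sup>2 else 0)"
      using B i by (cases k i rule: linorder_cases) (auto simp: upper_triangular_def power2_eq_square)
  qed
  finally show ?thesis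
    using i by simp
qed

text \<open>Schur triangularisation puts the eigenvalues, with multiplicity, on a diagonal.\<close>
lemma eigenvalues_trace:
  fixes A :: "complex mat"
  assumes A: "A \<in> carrier_mat n n"
  obtains e :: "nat \<Rightarrow> complex"
  where "{k. eigenvalue A k} = e ` {..<n}" "mat_trace A = (\<Sum>i<n. e i)"
    "mat_trace (A * A) = (\<Sum>i<n. (e i)\<^sup>2)"
proof -
  obtain es where es: "char_poly A = (\<Prod>a\<leftarrow>es. [:- a, 1:])"
    using char_poly_factorized[OF A] by auto
  obtain B P Q where "schur_decomposition A es = (B, P, Q)"
    by (cases "schur_decomposition A es") auto
  then have sim: "similar_mat_wit A B P Q" and ut: "upper_triangular B" and diag: "diag_mat B = es"
    using schur_decomposition[OF A es] by auto
  have B: "B \<in> carrier_mat n n"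
    using similar_mat_witD2[OF A sim] by auto
  define e where "e i = B $$ (i, i)" for i
  have "{k. eigenvalue A k} = set es"
    using eigenvalue_root_char_poly[OF A] by (auto simp: es poly_prod_list_zero_iff)
  also have "\<dots> = e ` {..<n}"
    using B by (auto simp: diag[symmetric] diag_mat_def e_def)
  finally have spec: "{k. eigenvalue A k} = e ` {..<n}" .
  have "mat_trace A = (\<Sum>i<n. e i)"
    using mat_trace_similar[OF sim] B by (simp add: mat_trace_def e_def)
  moreover have "mat_trace (A * A) = (\<Sum>i<n. (e i)\<^sup>2)"
  proof -
    have "similar_mat_wit (A * A) (B * B) P Q"
      using similar_mat_wit_pow[OF sim, of 2] A B by (simp add: numeral_2_eq_2)
    then have "mat_trace (A * A) = mat_trace (B * B)"
      by (rule mat_trace_similar)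
    also have "\<dots> = (\<Sum>i<n. (B * B) $$ (i, i))"
      using B by (simp add: mat_trace_def)
    finally show ?thesis
      using upper_triangular_mult_self_diag[OF B ut] by (simp add: e_def)
  qed
  ultimately show ?thesis
    using that spec by blast
qed

lemma sum_cmod_sq_pos:
  assumes "v \<in> carrier_vec n" "v \<noteq> 0\<^sub>v n"
  shows "0 < (\<Sum>i<n. (cmod (v $ i))\<^sup>2)"
proof -
  obtain i where "i < n" "v $ i \<noteq> 0"
    using assms by (metis eq_vecI carrier_vecD index_zero_vec)
  then show ?thesis
    by (intro sum_pos2[of _ i]) auto
qed

lemma psd_mat_eigenvalue:
  assumes psd: "psd_mat n A" and ev: "eigenvalue A k"
  shows "k = of_real (Re k)" "0 \<le> Re k"
proof -
  have A: "A \<in> carrier_mat n n" "hermitian_mat A"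
    using psd by (auto simp: psd_mat_def)
  obtain v where v: "v \<in> carrier_vec n" "v \<noteq> 0\<^sub>v n" "A *\<^sub>v v = k \<cdot>\<^sub>v v"
    using ev A unfolding eigenvalue_def eigenvector_def by auto
  define s where "s = (\<Sum>i<n. (cmod (v $ i))\<^sup>2)"
  have s: "0 < s"
    unfolding s_def by (rule sum_cmod_sq_pos[OF v(1,2)])
  have "expval A v = k * of_real s"
    unfolding expval_def v(3) using v(1) by (simp add: conjugate_scalar_prod_self s_def)
  then have k: "k = of_real (Re (expval A v) / s)"
    using expval_hermitian_real[OF A v(1)] s by (simp add: nonzero_eq_divide_eq)
  then show "k = of_real (Re k)"
    by simp
  show "0 \<le> Re k"
    using k s psd v(1) by (simp add: psd_mat_def)
qed

lemma psd_mat_lambda_max_eq_spectral_radius: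
  assumes "psd_mat n A"
  shows "lambda_max A = spectral_radius A"
proof -
  have "Re k = cmod k" if "eigenvalue A k" for k
    using psd_mat_eigenvalue[OF assms that] by (metis abs_of_nonneg norm_of_real)
  then have "Re ` {k. eigenvalue A k} = cmod ` spectrum A"
    by (auto simp: spectrum_def intro!: image_cong)
  then show ?thesis
    by (simp add: lambda_max_def spectral_radius_def)
qed

lemma density_opD:
  assumes "density_op d \<rho>"
  shows "\<rho> \<in> carrier_mat d d" "hermitian_mat \<rho>" "psd_mat d \<rho>" "(\<Sum>i<d. \<rho> $$ (i, i)) = 1" "0 < d"
proof -
  show carrier: "\<rho> \<in> carrier_mat d d" and "hermitian_mat \<rho>" "psd_mat d \<rho>"
    using assms by (auto simp: density_op_def psd_mat_def)
  show trace: "(\<Sum>i<d. \<rho> $$ (i, i)) = 1"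
    using assms carrier by (simp add: density_op_def mat_trace_def)
  then show "0 < d"
    by (cases d) auto
qed

lemma density_op_eigenvalues:
  assumes "density_op d \<rho>"
  obtains e :: "nat \<Rightarrow> real"
  where "Re ` {k. eigenvalue \<rho> k} = e ` {..<d}" "\<And>i. i < d \<Longrightarrow> 0 \<le> e i" "(\<Sum>i<d. e i) = 1"
    "Re (mat_trace (\<rho> * \<rho>)) = (\<Sum>i<d. (e i)\<^sup>2)"
proof -
  note \<rho> = density_opD[OF assms]
  obtain e where spec: "{k. eigenvalue \<rho> k} = e ` {..<d}" and tr: "mat_trace \<rho> = (\<Sum>i<d. e i)"
    and tr2: "mat_trace (\<rho> * \<rho>) = (\<Sum>i<d. (e i)\<^sup>2)"
    using eigenvalues_trace[OF \<rho>(1)] by blast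
  have real: "e i = of_real (Re (e i))" "0 \<le> Re (e i)" if "i < d" for i
    using psd_mat_eigenvalue[OF \<rho>(3)] spec that by auto
  show ?thesis
  proof (rule that[of "\<lambda>i. Re (e i)"])
    show "Re ` {k. eigenvalue \<rho> k} = (\<lambda>i. Re (e i)) ` {..<d}"
      unfolding spec by auto
    show "(\<Sum>i<d. Re (e i)) = 1"
      using tr \<rho>(1,4) by (simp add: mat_trace_def flip: Re_sum)
    have "(e i)\<^sup>2 = of_real ((Re (e i))\<^sup>2)" if "i < d" for i
      using real(1)[OF that] by (metis of_real_power)
    then show "Re (mat_trace (\<rho> * \<rho>)) = (\<Sum>i<d. (Re (e i))\<^sup>2)"
      unfolding tr2 Re_sum by (intro sum.cong refl) simp
  qed (use real in auto)
qed

lemma density_op_lambda_max_le_one: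
  assumes "density_op d \<rho>"
  shows "lambda_max \<rho> \<le> 1"
proof -
  obtain e where spec: "Re ` {k. eigenvalue \<rho> k} = e ` {..<d}"
    and nonneg: "\<And>i. i < d \<Longrightarrow> 0 \<le> e i" and sum: "(\<Sum>i<d. e i) = 1"
    and "Re (mat_trace (\<rho> * \<rho>)) = (\<Sum>i<d. (e i)\<^sup>2)"
    by (rule density_op_eigenvalues[OF assms]) auto
  have "e i \<le> 1" if "i < d" for i
    using member_le_sum[of i "{..<d}" e] nonneg that sum by simp
  then show ?thesis
    unfolding lambda_max_def spec using density_opD(5)[OF assms] by (subst Max_le_iff) auto
qed

lemma hermitian_mat_trace_mult_self:
  assumes A: "A \<in> carrier_mat n n" "hermitian_mat A"
  shows "mat_trace (A * A) = of_real (\<Sum>i<n. \<Sum>j<n. (cmod (A $$ (i, j)))\<^sup>2)"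
proof -
  have "(A * A) $$ (i, i) = of_real (\<Sum>j<n. (cmod (A $$ (i, j)))\<^sup>2)" if i: "i < n" for i
  proof -
    have "(A * A) $$ (i, i) = (\<Sum>j<n. A $$ (i, j) * A $$ (j, i))"
      using A i by (simp add: scalar_prod_def lessThan_atLeast0)
    also have "\<dots> = (\<Sum>j<n. A $$ (i, j) * cnj (A $$ (i, j)))"
    proof (intro sum.cong refl)
      fix j assume "j \<in> {..<n}"
      then show "A $$ (i, j) * A $$ (j, i) = A $$ (i, j) * cnj (A $$ (i, j))"
        using hermitian_matD[OF A i, of j] by simp
    qed
    finally show ?thesis
      by (simp add: complex_mult_cnj_cmod_sq)
  qed
  then show ?thesis
    using A by (simp add: mat_trace_def)
qed

lemma density_op_sum_cmod_sq_le_one: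
  assumes "density_op d \<rho>"
  shows "(\<Sum>i<d. \<Sum>j<d. (cmod (\<rho> $$ (i, j)))\<^sup>2) \<le> 1"
proof -
  note \<rho> = density_opD[OF assms]
  obtain e where "Re ` {k. eigenvalue \<rho> k} = e ` {..<d}"
    and nonneg: "\<And>i. i < d \<Longrightarrow> 0 \<le> e i" and sum: "(\<Sum>i<d. e i) = 1"
    and tr2: "Re (mat_trace (\<rho> * \<rho>)) = (\<Sum>i<d. (e i)\<^sup>2)"
    by (rule density_op_eigenvalues[OF assms]) auto
  have "(e i)\<^sup>2 \<le> e i" if "i < d" for i
    using member_le_sum[of i "{..<d}" e] nonneg that sum
    by (auto simp: power2_eq_square mult_left_le)
  then have "(\<Sum>i<d. (e i)\<^sup>2) \<le> 1"
    using sum_mono[of "{..<d}" "\<lambda>i. (e i)\<^sup>2" e] sum by auto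
  then show ?thesis
    using tr2 hermitian_mat_trace_mult_self[OF \<rho>(1,2)] by simp
qed

section \<open>Maximally coherent states and bounds on the coherence fraction\<close>

lemma cis_mult_cnj_cis: "cis a * cnj (cis b) = cis (a - b)"
  by (simp add: cis_cnj cis_mult)

lemma max_coh_vec_carrier: "max_coh_vec d \<theta> \<in> carrier_vec d"
  by (simp add: max_coh_vec_def)

lemma max_coh_vec_index: "i < d \<Longrightarrow> max_coh_vec d \<theta> $ i = cis (\<theta> i) / of_real (sqrt (real d))"
  by (simp add: max_coh_vec_def)

lemma cmod_max_coh_vec_sq: "i < d \<Longrightarrow> (cmod (max_coh_vec d \<theta> $ i))\<^sup>2 = 1 / real d"
  by (simp add: max_coh_vec_index norm_divide power_divide)

lemma max_coh_vec_unit: "0 < d \<Longrightarrow> (\<Sum>i<d. (cmod (max_coh_vec d \<theta> $ i))\<^sup>2) = 1"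
  by (simp add: cmod_max_coh_vec_sq)

lemma max_coh_vec_mult_cnj:
  assumes "i < d" "j < d"
  shows "max_coh_vec d \<theta> $ i * cnj (max_coh_vec d \<theta> $ j) = cis (\<theta> i - \<theta> j) / of_nat d"
proof -
  let ?s = "complex_of_real (sqrt (real d))"
  have "?s * ?s = of_nat d"
    by (simp flip: of_real_mult)
  then show ?thesis
    unfolding max_coh_vec_index[OF assms(1)] max_coh_vec_index[OF assms(2)]
      complex_cnj_divide complex_cnj_complex_of_real times_divide_times_eq
    by (simp add: cis_mult_cnj_cis)
qed

lemma max_coh_vec_in_max_coh_states [simp]: "max_coh_vec d \<theta> \<in> max_coh_states d"
  by (simp add: max_coh_states_def)

lemma max_coh_statesE:
  assumes "\<phi> \<in> max_coh_states d"
  obtains \<theta> where "\<phi> = max_coh_vec d \<theta>"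
  using assms by (auto simp: max_coh_states_def)

lemma max_coh_states_nonempty: "max_coh_states d \<noteq> {}"
  by (simp add: max_coh_states_def)

lemma expval_max_coh_le_lambda_max:
  assumes \<rho>: "density_op d \<rho>" and \<phi>: "\<phi> \<in> max_coh_states d"
  shows "Re (expval \<rho> \<phi>) \<le> lambda_max \<rho>"
proof -
  note \<rho>' = density_opD[OF \<rho>]
  obtain \<theta> where "\<phi> = max_coh_vec d \<theta>"
    using \<phi> by (rule max_coh_statesE)
  then have "Re (expval \<rho> \<phi>) \<le> spectral_radius \<rho>"
    using hermitian_expval_le_spectral_radius[OF \<rho>'(1,2) max_coh_vec_carrier max_coh_vec_unit[OF \<rho>'(5)]]
    by simp
  then show ?thesis
    by (simp add: psd_mat_lambda_max_eq_spectral_radius[OF \<rho>'(3)])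
qed

lemma bdd_above_expval_max_coh:
  assumes "density_op d \<rho>"
  shows "bdd_above ((\<lambda>\<phi>. Re (expval \<rho> \<phi>)) ` max_coh_states d)"
  using expval_max_coh_le_lambda_max[OF assms] by (intro bdd_aboveI2)

lemma coh_fraction_le_lambda_max:
  assumes "density_op d \<rho>"
  shows "coh_fraction d \<rho> \<le> lambda_max \<rho>"
  unfolding coh_fraction_def
  using expval_max_coh_le_lambda_max[OF assms] max_coh_states_nonempty by (intro cSUP_least)

lemma expval_le_coh_fraction:
  assumes "density_op d \<rho>" "\<phi> \<in> max_coh_states d"
  shows "Re (expval \<rho> \<phi>) \<le> coh_fraction d \<rho>"
  unfolding coh_fraction_def by (rule cSUP_upper[OF assms(2) bdd_above_expval_max_coh[OF assms(1)]])

lemma sum_cis_roots_of_unity: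
  fixes m :: int
  assumes "\<not> int d dvd m"
  shows "(\<Sum>t<d. cis (2 * pi * real t * of_int m / real d)) = 0"
proof (cases "d = 0")
  case False
  define w where "w = cis (2 * pi * of_int m / real d)"
  have pow: "cis (2 * pi * real t * of_int m / real d) = w ^ t" for t
    by (simp add: w_def DeMoivre mult_ac)
  have "w ^ d = 1"
    using False by (simp add: w_def DeMoivre cis_multiple_2pi)
  moreover have "w \<noteq> 1"
  proof
    assume "w = 1"
    then have "cos (2 * pi * of_int m / real d) = 1"
      by (metis w_def cis.sel(1) one_complex.sel(1))
    then obtain k :: int where "2 * pi * of_int m / real d = of_int k * 2 * pi"
      using cos_one_2pi_int by blast
    then have "of_int m = (of_int (k * int d) :: real)"
      using False by (simp add: field_simps)
    then show False
      using assms by (metis dvd_triv_right mult.commute of_int_eq_iff)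
  qed
  ultimately show ?thesis
    by (simp add: pow sum_gp_strict)
qed simp

definition dft_phase :: "nat \<Rightarrow> nat \<Rightarrow> nat \<Rightarrow> real" where
  "dft_phase d t i = 2 * pi * real t * real i / real d"

lemma sum_cis_dft_phase_diff:
  assumes "i < d" "j < d"
  shows "(\<Sum>t<d. cis (dft_phase d t i - dft_phase d t j)) = (if i = j then of_nat d else 0)"
proof (cases "i = j")
  case False
  have "\<not> int d dvd (int i - int j)"
  proof
    assume "int d dvd (int i - int j)"
    then have "\<bar>int d\<bar> \<le> \<bar>int i - int j\<bar>"
      using False by (intro dvd_imp_le_int) auto
    then show False
      using assms by linarith
  qed
  then have "(\<Sum>t<d. cis (2 * pi * real t * of_int (int i - int j) / real d)) = 0"
    by (rule sum_cis_roots_of_unity)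
  then show ?thesis
    using False by (simp add: dft_phase_def diff_divide_distrib right_diff_distrib)
qed simp

lemma sum_expval_dft:
  assumes A: "A \<in> carrier_mat d d"
  shows "(\<Sum>t<d. expval A (max_coh_vec d (dft_phase d t))) = mat_trace A"
proof -
  define c where "c t i j = cis (dft_phase d t j - dft_phase d t i)" for t i j
  have "expval A (max_coh_vec d (dft_phase d t))
      = (\<Sum>i<d. \<Sum>j<d. A $$ (i, j) / of_nat d * c t i j)" for t
    unfolding expval_eq_sum[OF A max_coh_vec_carrier]
  proof (intro sum.cong refl)
    fix i j assume "i \<in> {..<d}" "j \<in> {..<d}"
    then show "cnj (max_coh_vec d (dft_phase d t) $ i) * A $$ (i, j) * max_coh_vec d (dft_phase d t) $ j
        = A $$ (i, j) / of_nat d * c t i j"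
      using max_coh_vec_mult_cnj[of j d i] by (simp add: c_def mult_ac)
  qed
  then have "(\<Sum>t<d. expval A (max_coh_vec d (dft_phase d t)))
      = (\<Sum>t<d. \<Sum>i<d. \<Sum>j<d. A $$ (i, j) / of_nat d * c t i j)"
    by simp
  also have "\<dots> = (\<Sum>i<d. \<Sum>t<d. \<Sum>j<d. A $$ (i, j) / of_nat d * c t i j)"
    by (rule sum.swap)
  also have "\<dots> = (\<Sum>i<d. \<Sum>j<d. \<Sum>t<d. A $$ (i, j) / of_nat d * c t i j)"
    by (rule sum.cong[OF refl], rule sum.swap)
  also have "\<dots> = (\<Sum>i<d. \<Sum>j<d. A $$ (i, j) / of_nat d * (\<Sum>t<d. c t i j))"
    by (simp add: sum_distrib_left)
  also have "\<dots> = (\<Sum>i<d. A $$ (i, i))"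
    by (simp add: c_def sum_cis_dft_phase_diff if_distrib sum.delta cong: if_cong)
  also have "\<dots> = mat_trace A"
    using A by (simp add: mat_trace_def)
  finally show ?thesis .
qed

lemma coh_fraction_ge_inverse_dim:
  assumes \<rho>: "density_op d \<rho>"
  shows "1 / real d \<le> coh_fraction d \<rho>"
proof -
  note \<rho>' = density_opD[OF \<rho>]
  define f where "f t = Re (expval \<rho> (max_coh_vec d (dft_phase d t)))" for t
  have "(\<Sum>t<d. f t) = 1"
    using sum_expval_dft[OF \<rho>'(1)] \<rho>'(1,4) by (simp add: f_def mat_trace_def flip: Re_sum)
  have "\<exists>t<d. 1 / real d \<le> f t"
  proof (rule ccontr)
    assume "\<not> ?thesis"
    then have "(\<Sum>t<d. f t) < (\<Sum>t<d. 1 / real d)"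
      using \<rho>'(5) by (intro sum_strict_mono) auto
    then show False
      using \<open>(\<Sum>t<d. f t) = 1\<close> \<rho>'(5) by simp
  qed
  then obtain t where "1 / real d \<le> f t"
    by blast
  also have "f t \<le> coh_fraction d \<rho>"
    unfolding f_def by (rule expval_le_coh_fraction[OF \<rho> max_coh_vec_in_max_coh_states])
  finally show ?thesis .
qed

lemma expval_incoherent:
  assumes A: "A \<in> carrier_mat d d" and inc: "incoherent d A" and v: "v \<in> carrier_vec d"
  shows "expval A v = (\<Sum>i<d. A $$ (i, i) * of_real ((cmod (v $ i))\<^sup>2))"
  unfolding expval_eq_sum[OF A v]
proof (rule sum.cong[OF refl])
  fix i assume i: "i \<in> {..<d}"
  have "(\<Sum>j<d. cnj (v $ i) * A $$ (i, j) * v $ j) = (\<Sum>j<d. if j = i then cnj (v $ i) * A $$ (i, i) * v $ i else 0)"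
    using inc i by (intro sum.cong refl) (auto simp: incoherent_def)
  then show "(\<Sum>j<d. cnj (v $ i) * A $$ (i, j) * v $ j) = A $$ (i, i) * of_real ((cmod (v $ i))\<^sup>2)"
    using i by (simp add: complex_mult_cnj_cmod_sq mult_ac)
qed

lemma coh_fraction_incoherent:
  assumes \<rho>: "density_op d \<rho>" and inc: "incoherent d \<rho>"
  shows "coh_fraction d \<rho> = 1 / real d"
proof -
  note \<rho>' = density_opD[OF \<rho>]
  have "Re (expval \<rho> \<phi>) = 1 / real d" if \<phi>_in: "\<phi> \<in> max_coh_states d" for \<phi>
  proof -
    obtain \<theta> where \<phi>: "\<phi> = max_coh_vec d \<theta>"
      using \<phi>_in by (rule max_coh_statesE)
    have "expval \<rho> \<phi> = (\<Sum>i<d. \<rho> $$ (i, i)) * of_real (1 / real d)"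
      unfolding \<phi> expval_incoherent[OF \<rho>'(1) inc max_coh_vec_carrier]
      by (simp add: cmod_max_coh_vec_sq sum_divide_distrib)
    then show ?thesis
      using \<rho>'(4) by simp
  qed
  then show ?thesis
    unfolding coh_fraction_def using max_coh_states_nonempty by (simp cong: SUP_cong)
qed

lemma expval_proj_self:
  assumes "v \<in> carrier_vec n"
  shows "expval (proj v) v = of_real ((\<Sum>i<n. (cmod (v $ i))\<^sup>2)\<^sup>2)"
proof -
  have P: "proj v \<in> carrier_mat n n"
    using assms by (simp add: proj_def)
  have "expval (proj v) v = (\<Sum>i<n. \<Sum>j<n. (cnj (v $ i) * v $ i) * (cnj (v $ j) * v $ j))"
    unfolding expval_eq_sum[OF P assms] using assms by (auto simp: proj_def mult_ac intro!: sum.cong)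
  also have "\<dots> = (\<Sum>i<n. \<Sum>j<n. of_real ((cmod (v $ i))\<^sup>2 * (cmod (v $ j))\<^sup>2))"
    by (simp add: complex_mult_cnj_cmod_sq)
  also have "\<dots> = of_real ((\<Sum>i<n. (cmod (v $ i))\<^sup>2)\<^sup>2)"
    by (simp add: power2_eq_square sum_product)
  finally show ?thesis .
qed

lemma coh_fraction_proj:
  assumes \<rho>: "density_op d \<rho>" and \<phi>: "\<phi> \<in> max_coh_states d" and eq: "\<rho> = proj \<phi>"
  shows "coh_fraction d \<rho> = 1"
proof -
  obtain \<theta> where \<theta>: "\<phi> = max_coh_vec d \<theta>"
    using \<phi> by (rule max_coh_statesE)
  have "Re (expval \<rho> \<phi>) = 1"
    unfolding eq \<theta> expval_proj_self[OF max_coh_vec_carrier]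
    using max_coh_vec_unit[OF density_opD(5)[OF \<rho>]] by simp
  then have "1 \<le> coh_fraction d \<rho>"
    using expval_le_coh_fraction[OF \<rho> \<phi>] by simp
  moreover have "coh_fraction d \<rho> \<le> 1"
    using coh_fraction_le_lambda_max[OF \<rho>] density_op_lambda_max_le_one[OF \<rho>] by simp
  ultimately show ?thesis
    by simp
qed

section \<open>Coherence fraction one\<close>

lemma cmod_diff_sq: "(cmod (a - b))\<^sup>2 = (cmod a)\<^sup>2 - 2 * Re (a * cnj b) + (cmod b)\<^sup>2"
  unfolding cmod_power2 by (simp add: power2_eq_square algebra_simps)

lemma sum_cmod_sq_diff_proj:
  assumes A: "A \<in> carrier_mat n n" and v: "v \<in> carrier_vec n"
  shows "(\<Sum>i<n. \<Sum>j<n. (cmod (A $$ (i, j) - proj v $$ (i, j)))\<^sup>2)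
    = (\<Sum>i<n. \<Sum>j<n. (cmod (A $$ (i, j)))\<^sup>2) - 2 * Re (expval A v) + (\<Sum>i<n. (cmod (v $ i))\<^sup>2)\<^sup>2"
proof -
  have "(\<Sum>i<n. \<Sum>j<n. (cmod (A $$ (i, j) - proj v $$ (i, j)))\<^sup>2)
      = (\<Sum>i<n. \<Sum>j<n. (cmod (A $$ (i, j)))\<^sup>2 - 2 * Re (cnj (v $ i) * A $$ (i, j) * v $ j)
          + (cmod (v $ i))\<^sup>2 * (cmod (v $ j))\<^sup>2)"
    using v by (intro sum.cong refl) (simp add: proj_def cmod_diff_sq norm_mult power_mult_distrib mult_ac)
  also have "\<dots> = (\<Sum>i<n. \<Sum>j<n. (cmod (A $$ (i, j)))\<^sup>2)
      - 2 * Re (\<Sum>i<n. \<Sum>j<n. cnj (v $ i) * A $$ (i, j) * v $ j) + (\<Sum>i<n. (cmod (v $ i))\<^sup>2)\<^sup>2"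
    unfolding power2_eq_square[of "\<Sum>i<n. (cmod (v $ i))\<^sup>2"] sum_product
    by (simp add: sum.distrib sum_subtractf sum_distrib_left Re_sum)
  finally show ?thesis
    by (simp add: expval_eq_sum[OF A v])
qed

lemma cmod_diff_proj_max_coh_sq_le:
  assumes \<rho>: "density_op d \<rho>" and \<phi>: "\<phi> \<in> max_coh_states d" and ij: "i < d" "j < d"
  shows "(cmod (\<rho> $$ (i, j) - proj \<phi> $$ (i, j)))\<^sup>2 \<le> 2 - 2 * Re (expval \<rho> \<phi>)"
proof -
  note \<rho>' = density_opD[OF \<rho>]
  obtain \<theta> where \<theta>: "\<phi> = max_coh_vec d \<theta>"
    using \<phi> by (rule max_coh_statesE)
  let ?E = "\<lambda>p. (cmod (\<rho> $$ p - proj \<phi> $$ p))\<^sup>2"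
  have "?E (i, j) \<le> (\<Sum>p\<in>{..<d} \<times> {..<d}. ?E p)"
    using ij by (intro member_le_sum) auto
  also have "\<dots> = (\<Sum>i<d. \<Sum>j<d. ?E (i, j))"
    by (simp add: sum.cartesian_product)
  also have "\<dots> = (\<Sum>i<d. \<Sum>j<d. (cmod (\<rho> $$ (i, j)))\<^sup>2) - 2 * Re (expval \<rho> \<phi>) + 1"
    unfolding \<theta> sum_cmod_sq_diff_proj[OF \<rho>'(1) max_coh_vec_carrier] max_coh_vec_unit[OF \<rho>'(5)] by simp
  also have "\<dots> \<le> 2 - 2 * Re (expval \<rho> \<phi>)"
    using density_op_sum_cmod_sq_le_one[OF \<rho>] by simp
  finally show ?thesis .
qed

lemma proj_max_coh_vec_index:
  assumes "i < d" "j < d"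
  shows "proj (max_coh_vec d \<theta>) $$ (i, j) = cis (\<theta> i - \<theta> j) / of_nat d"
proof -
  have "dim_vec (max_coh_vec d \<theta>) = d"
    by (simp add: max_coh_vec_def)
  then show ?thesis
    using assms by (simp add: proj_def max_coh_vec_mult_cnj)
qed

lemma of_nat_mult_divide_cnj_divide:
  "d \<noteq> 0 \<Longrightarrow> of_nat d * (z / of_nat d) * cnj (w / of_nat d) = z * cnj w / (of_nat d :: complex)"
  by simp

text \<open>Two closed conditions that single out the projectors onto maximally coherent states.\<close>
lemma proj_max_coh_vec_entries:
  assumes "i < d" "j < d"
  shows "cmod (proj (max_coh_vec d \<theta>) $$ (i, 0)) = 1 / real d"
    and "proj (max_coh_vec d \<theta>) $$ (i, j)
      = of_nat d * proj (max_coh_vec d \<theta>) $$ (i, 0) * cnj (proj (max_coh_vec d \<theta>) $$ (j, 0))"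
proof -
  have d: "0 < d"
    using assms by simp
  show "cmod (proj (max_coh_vec d \<theta>) $$ (i, 0)) = 1 / real d"
    using assms d by (simp add: proj_max_coh_vec_index norm_divide)
  have "cis (\<theta> i - \<theta> j) = cis (\<theta> i - \<theta> 0) * cnj (cis (\<theta> j - \<theta> 0))"
    by (simp add: cis_mult_cnj_cis)
  then show "proj (max_coh_vec d \<theta>) $$ (i, j)
      = of_nat d * proj (max_coh_vec d \<theta>) $$ (i, 0) * cnj (proj (max_coh_vec d \<theta>) $$ (j, 0))"
    using assms d by (simp only: proj_max_coh_vec_index of_nat_mult_divide_cnj_divide)
qed

lemma eq_proj_max_coh_vecI:
  assumes M: "M \<in> carrier_mat d d" and mod: "\<And>i. i < d \<Longrightarrow> cmod (M $$ (i, 0)) = 1 / real d"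
    and fac: "\<And>i j. i < d \<Longrightarrow> j < d \<Longrightarrow> M $$ (i, j) = of_nat d * M $$ (i, 0) * cnj (M $$ (j, 0))"
  shows "M = proj (max_coh_vec d (\<lambda>i. Arg (M $$ (i, 0))))"
proof -
  define a where "a i = Arg (M $$ (i, 0))" for i
  have polar: "M $$ (i, 0) = cis (a i) / of_nat d" if "i < d" for i
    using rcis_cmod_Arg[of "M $$ (i, 0)"] mod[OF that] by (simp add: rcis_def a_def)
  have "M = proj (max_coh_vec d a)"
  proof (rule eq_matI)
    fix i j assume "i < dim_row (proj (max_coh_vec d a))" "j < dim_col (proj (max_coh_vec d a))"
    then have ij: "i < d" "j < d"
      by (simp_all add: proj_def max_coh_vec_def)
    have "M $$ (i, j) = of_nat d * (cis (a i) / of_nat d) * cnj (cis (a j) / of_nat d)"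
      unfolding fac[OF ij] polar[OF ij(1)] polar[OF ij(2)] ..
    also have "\<dots> = cis (a i - a j) / of_nat d"
      using ij by (simp only: of_nat_mult_divide_cnj_divide cis_mult_cnj_cis)
    finally show "M $$ (i, j) = proj (max_coh_vec d a) $$ (i, j)"
      using ij by (simp add: proj_max_coh_vec_index)
  qed (use M in \<open>simp_all add: proj_def max_coh_vec_def\<close>)
  then show ?thesis
    by (simp add: a_def[abs_def])
qed

lemma proj_max_coh_vec_tendsto:
  assumes \<rho>: "density_op d \<rho>" and lim: "(\<lambda>n. Re (expval \<rho> (max_coh_vec d (\<Theta> n)))) \<longlonglongrightarrow> 1"
    and ij: "i < d" "j < d"
  shows "(\<lambda>n. proj (max_coh_vec d (\<Theta> n)) $$ (i, j)) \<longlonglongrightarrow> \<rho> $$ (i, j)"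
proof -
  let ?x = "\<lambda>n. Re (expval \<rho> (max_coh_vec d (\<Theta> n)))"
  let ?e = "\<lambda>n. cmod (proj (max_coh_vec d (\<Theta> n)) $$ (i, j) - \<rho> $$ (i, j))"
  have le: "?e n \<le> sqrt (2 - 2 * ?x n)" for n
  proof (rule real_le_rsqrt)
    have "(?e n)\<^sup>2 = (cmod (\<rho> $$ (i, j) - proj (max_coh_vec d (\<Theta> n)) $$ (i, j)))\<^sup>2"
      by (metis norm_minus_commute)
    also have "\<dots> \<le> 2 - 2 * ?x n"
      by (rule cmod_diff_proj_max_coh_sq_le[OF \<rho> max_coh_vec_in_max_coh_states ij])
    finally show "(?e n)\<^sup>2 \<le> 2 - 2 * ?x n" .
  qed
  have sqrt_lim: "(\<lambda>n. sqrt (2 - 2 * ?x n)) \<longlonglongrightarrow> 0"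
    using tendsto_real_sqrt[OF tendsto_diff[OF tendsto_const tendsto_mult[OF tendsto_const lim]],
        of 2 2] by simp
  have "?e \<longlonglongrightarrow> 0"
    using le by (intro tendsto_sandwich[OF _ _ tendsto_const sqrt_lim] always_eventually allI) simp_all
  then show ?thesis
    by (simp add: tendsto_norm_zero_iff LIM_zero_iff)
qed

lemma coh_fraction_eq_one_approx:
  assumes \<rho>: "density_op d \<rho>" and one: "coh_fraction d \<rho> = 1"
  obtains \<Theta> :: "nat \<Rightarrow> nat \<Rightarrow> real" where "(\<lambda>n. Re (expval \<rho> (max_coh_vec d (\<Theta> n)))) \<longlonglongrightarrow> 1"
proof -
  define f where "f \<theta> = Re (expval \<rho> (max_coh_vec d \<theta>))" for \<theta>
  have range: "(\<lambda>\<phi>. Re (expval \<rho> \<phi>)) ` max_coh_states d = range f"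
    by (simp add: max_coh_states_def image_image f_def)
  have "Sup (range f) \<in> closure (range f)"
    using bdd_above_expval_max_coh[OF \<rho>] range by (intro closure_contains_Sup) auto
  moreover have "Sup (range f) = 1"
    using one range by (simp add: coh_fraction_def)
  ultimately obtain x where x: "\<And>n. x n \<in> range f" and x_lim: "x \<longlonglongrightarrow> 1"
    unfolding closure_sequential by auto
  have "\<forall>n. \<exists>\<theta>. x n = f \<theta>"
    using x by (simp add: image_iff)
  then obtain \<Theta> where "\<And>n. x n = f (\<Theta> n)"
    by (metis choice)
  then have "x = (\<lambda>n. f (\<Theta> n))"
    by (rule ext)
  then show ?thesis
    using that x_lim by (simp add: f_def)
qed

lemma coh_fraction_eq_one_imp_proj:
  assumes \<rho>: "density_op d \<rho>" and one: "coh_fraction d \<rho> = 1"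
  shows "\<exists>\<phi>\<in>max_coh_states d. \<rho> = proj \<phi>"
proof -
  obtain \<Theta> where "(\<lambda>n. Re (expval \<rho> (max_coh_vec d (\<Theta> n)))) \<longlonglongrightarrow> 1"
    using coh_fraction_eq_one_approx[OF assms] by blast
  note lim = proj_max_coh_vec_tendsto[OF \<rho> this]
  have "cmod (\<rho> $$ (i, 0)) = 1 / real d" if i: "i < d" for i
  proof (rule LIMSEQ_unique)
    show "(\<lambda>n. cmod (proj (max_coh_vec d (\<Theta> n)) $$ (i, 0))) \<longlonglongrightarrow> cmod (\<rho> $$ (i, 0))"
      using i by (intro tendsto_norm lim) auto
    show "(\<lambda>n. cmod (proj (max_coh_vec d (\<Theta> n)) $$ (i, 0))) \<longlonglongrightarrow> 1 / real d"
      using i by (simp add: proj_max_coh_vec_entries(1))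
  qed
  moreover have "\<rho> $$ (i, j) = of_nat d * \<rho> $$ (i, 0) * cnj (\<rho> $$ (j, 0))" if ij: "i < d" "j < d" for i j
  proof (rule LIMSEQ_unique)
    show "(\<lambda>n. proj (max_coh_vec d (\<Theta> n)) $$ (i, j)) \<longlonglongrightarrow> \<rho> $$ (i, j)"
      using lim ij by blast
    show "(\<lambda>n. proj (max_coh_vec d (\<Theta> n)) $$ (i, j)) \<longlonglongrightarrow> of_nat d * \<rho> $$ (i, 0) * cnj (\<rho> $$ (j, 0))"
      unfolding proj_max_coh_vec_entries(2)[OF ij] using ij by (intro tendsto_intros lim) auto
  qed
  ultimately have "\<rho> = proj (max_coh_vec d (\<lambda>i. Arg (\<rho> $$ (i, 0))))"
    by (rule eq_proj_max_coh_vecI[OF density_opD(1)[OF \<rho>]])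
  then show ?thesis
    using max_coh_vec_in_max_coh_states by blast
qed

theorem mainTheorem4:
  fixes d :: nat and \<rho> :: "complex mat"
  assumes "density_op d \<rho>"
  shows "1 / real d \<le> coh_fraction d \<rho> \<and> coh_fraction d \<rho> \<le> lambda_max \<rho> \<and> lambda_max \<rho> \<le> 1
    \<and> (coh_fraction d \<rho> = 1 \<longleftrightarrow> (\<exists>\<phi> \<in> max_coh_states d. \<rho> = proj \<phi>))
    \<and> (incoherent d \<rho> \<longrightarrow> coh_fraction d \<rho> = 1 / real d)"
  using coh_fraction_ge_inverse_dim[OF assms] coh_fraction_le_lambda_max[OF assms]
    density_op_lambda_max_le_one[OF assms] coh_fraction_eq_one_imp_proj[OF assms]
    coh_fraction_proj[OF assms] coh_fraction_incoherent[OF assms]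
  by blast

end
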